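(* Let $S\subset\mathbb{T}^2$ be compact and suppose no non-zero positive Borel measure in $A_{\vec 0}(\mathbb{D}^2)^\perp$ has support contained in $S$. Then for every positive finite Borel measure $\mu$ on $\mathbb{T}^2$ with support contained in $S$, the closed subspace of $L^2(d\mu)$ spanned by $A_{\vec 0}(\mathbb{D}^2)$ equals the closed subspace of $L^2(d\mu)$ spanned by $A(\mathbb{D}^2)$.
   Context: $A(\mathbb{D}^2)$ is the bidisc algebra (continuous on $\overline{\mathbb{D}}^2$, holomorphic on $\mathbb{D}^2$), regarded as a subspace of $C(\mathbb{T}^2)$; $A_{\vec 0}(\mathbb{D}^2)=\{z_1z_2 f: f\in A(\mathbb{D}^2)\}$; $A_{\vec 0}(\mathbb{D}^2)^\perp$ is the set of complex Borel measures of bounded variation on $\mathbb{T}^2$ annihilating every function in $A_{\vec 0}(\mathbb{D}^2)$. *)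

theory Defs
  imports "HOL-Complex_Analysis.Complex_Analysis" "HOL-Probability.Probability"
begin

definition torus2 :: "(complex \<times> complex) set" where
  "torus2 = {p. cmod (fst p) = 1 \<and> cmod (snd p) = 1}"

text \<open>The bidisc algebra A(D^2): continuous on the closed bidisc, holomorphic on the
  open bidisc (holomorphic in each variable separately, which together with continuity
  is the usual notion of holomorphy, by Osgood's lemma).\<close>
definition bidisc_algebra :: "(complex \<times> complex \<Rightarrow> complex) set" where
  "bidisc_algebra = {f. continuous_on (cball 0 1 \<times> cball 0 1) f \<and>
      (\<forall>w \<in> ball 0 1. (\<lambda>z. f (z, w)) holomorphic_on ball 0 1) \<and>
      (\<forall>z \<in> ball 0 1. (\<lambda>w. f (z, w)) holomorphic_on ball 0 1)}"

definition bidisc_algebra0 :: "(complex \<times> complex \<Rightarrow> complex) set" where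
  "bidisc_algebra0 = {(\<lambda>p. fst p * snd p * f p) | f. f \<in> bidisc_algebra}"

definition borel_measure_on_T2 :: "(complex \<times> complex) measure \<Rightarrow> bool" where
  "borel_measure_on_T2 \<mu> \<longleftrightarrow> sets \<mu> = sets (restrict_space borel torus2)"

text \<open>The closed subspace of L^2(mu) spanned by a family F (which here is already a linear
  subspace), represented by the set of all square-integrable representatives that are
  L^2(mu)-limits of elements of F.\<close>
definition L2_closure ::
  "(complex \<times> complex) measure \<Rightarrow> (complex \<times> complex \<Rightarrow> complex) set
     \<Rightarrow> (complex \<times> complex \<Rightarrow> complex) set" where
  "L2_closure \<mu> F = {h. h \<in> borel_measurable \<mu> \<and> integrable \<mu> (\<lambda>x. (cmod (h x))\<^sup>2) \<and>
      (\<forall>e>0. \<exists>f\<in>F. (\<integral>x. (cmod (h x - f x))\<^sup>2 \<partial>\<mu>) < e)}"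

end

(*
  Let h = 1 - P, where P is the orthogonal projection of the constant 1 onto the closure of
  A_0(D^2) in L^2(mu). Because A_0 is closed under products, phi (1 - g) lies in A_0 for all
  phi, g in A_0; letting g tend to P shows that phi h is orthogonal to h, i.e. the positive
  measure |h|^2 mu annihilates A_0. It is carried by S, so by hypothesis it vanishes. Hence
  1 lies in the closure of A_0, and since A_0 is an ideal of A(D^2), multiplying approximants
  of 1 by a bounded f in A(D^2) approximates f by elements of A_0.
*)
theory Submission
  imports Defs
begin

section \<open>Square-integrable functions\<close>

definition square_integrable :: "'a measure \<Rightarrow> ('a \<Rightarrow> complex) \<Rightarrow> bool" where
  "square_integrable M u \<longleftrightarrow> u \<in> borel_measurable M \<and> integrable M (\<lambda>x. (cmod (u x))\<^sup>2)"

definition L2_sqnorm :: "'a measure \<Rightarrow> ('a \<Rightarrow> complex) \<Rightarrow> real" where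
  "L2_sqnorm M u = (\<integral>x. (cmod (u x))\<^sup>2 \<partial>M)"

definition L2_inner :: "'a measure \<Rightarrow> ('a \<Rightarrow> complex) \<Rightarrow> ('a \<Rightarrow> complex) \<Rightarrow> complex" where
  "L2_inner M u v = (\<integral>x. u x * cnj (v x) \<partial>M)"

lemma L2_closure_iff:
  "h \<in> L2_closure M F \<longleftrightarrow>
     square_integrable M h \<and> (\<forall>e>0. \<exists>f\<in>F. L2_sqnorm M (\<lambda>x. h x - f x) < e)"
  by (auto simp: L2_closure_def square_integrable_def L2_sqnorm_def)

lemma L2_sqnorm_nonneg: "0 \<le> L2_sqnorm M u"
  unfolding L2_sqnorm_def by (rule integral_nonneg_AE) auto

lemma L2_sqnorm_eq_nn_integral:
  assumes "square_integrable M u"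
  shows "ennreal (L2_sqnorm M u) = (\<integral>\<^sup>+x. ennreal ((cmod (u x))\<^sup>2) \<partial>M)"
  using assms unfolding L2_sqnorm_def square_integrable_def
  by (intro nn_integral_eq_integral[symmetric]) auto

lemma L2_sqnorm_cnj [simp]: "L2_sqnorm M (\<lambda>x. cnj (u x)) = L2_sqnorm M u"
  by (simp add: L2_sqnorm_def)

lemma square_integrable_cnj:
  assumes "square_integrable M u" shows "square_integrable M (\<lambda>x. cnj (u x))"
proof -
  have "(\<lambda>x. cnj (u x)) \<in> borel_measurable M"
    using assms borel_measurable_continuous_on[OF continuous_on_cnj[OF continuous_on_id], of u M]
    by (simp add: square_integrable_def)
  with assms show ?thesis by (simp add: square_integrable_def)
qed

lemma cmod_add_sq_le: "(cmod (a + b))\<^sup>2 \<le> 2 * (cmod a)\<^sup>2 + 2 * (cmod b)\<^sup>2"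
proof -
  have "(cmod (a + b))\<^sup>2 \<le> (cmod a + cmod b)\<^sup>2"
    by (simp add: norm_triangle_ineq power_mono)
  also have "\<dots> \<le> 2 * (cmod a)\<^sup>2 + 2 * (cmod b)\<^sup>2"
    using sum_squares_bound[of "cmod a" "cmod b"] by (simp add: power2_sum)
  finally show ?thesis .
qed

lemma square_integrable_add:
  assumes u: "square_integrable M u" and v: "square_integrable M v"
  shows "square_integrable M (\<lambda>x. u x + v x)"
    and "L2_sqnorm M (\<lambda>x. u x + v x) \<le> 2 * L2_sqnorm M u + 2 * L2_sqnorm M v"
proof -
  have bound: "integrable M (\<lambda>x. 2 * (cmod (u x))\<^sup>2 + 2 * (cmod (v x))\<^sup>2)"
    using u v by (auto simp: square_integrable_def)
  have meas: "(\<lambda>x. u x + v x) \<in> borel_measurable M"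
    using u v by (auto simp: square_integrable_def)
  have int: "integrable M (\<lambda>x. (cmod (u x + v x))\<^sup>2)"
    by (rule Bochner_Integration.integrable_bound[OF bound]) (use meas cmod_add_sq_le in auto)
  with meas show "square_integrable M (\<lambda>x. u x + v x)"
    by (simp add: square_integrable_def)
  have "L2_sqnorm M (\<lambda>x. u x + v x) \<le> (\<integral>x. 2 * (cmod (u x))\<^sup>2 + 2 * (cmod (v x))\<^sup>2 \<partial>M)"
    unfolding L2_sqnorm_def by (rule integral_mono[OF int bound cmod_add_sq_le])
  also have "\<dots> = 2 * L2_sqnorm M u + 2 * L2_sqnorm M v"
    using u v by (simp add: L2_sqnorm_def square_integrable_def)
  finally show "L2_sqnorm M (\<lambda>x. u x + v x) \<le> 2 * L2_sqnorm M u + 2 * L2_sqnorm M v" .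
qed

lemma square_integrable_bounded_mult:
  assumes u: "square_integrable M u" and \<phi>: "\<phi> \<in> borel_measurable M"
    and B: "\<And>x. x \<in> space M \<Longrightarrow> cmod (\<phi> x) \<le> B"
  shows "square_integrable M (\<lambda>x. \<phi> x * u x)"
    and "L2_sqnorm M (\<lambda>x. \<phi> x * u x) \<le> B\<^sup>2 * L2_sqnorm M u"
proof -
  have le: "(cmod (\<phi> x * u x))\<^sup>2 \<le> B\<^sup>2 * (cmod (u x))\<^sup>2" if "x \<in> space M" for x
  proof -
    have "cmod (\<phi> x * u x) \<le> B * cmod (u x)"
      unfolding norm_mult using B[OF that] by (simp add: mult_right_mono)
    then show ?thesis
      by (metis norm_ge_zero power_mono power_mult_distrib)
  qed
  have bound: "integrable M (\<lambda>x. B\<^sup>2 * (cmod (u x))\<^sup>2)"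
    using u by (simp add: square_integrable_def)
  have meas: "(\<lambda>x. \<phi> x * u x) \<in> borel_measurable M"
    using u \<phi> by (auto simp: square_integrable_def)
  have int: "integrable M (\<lambda>x. (cmod (\<phi> x * u x))\<^sup>2)"
    by (rule Bochner_Integration.integrable_bound[OF bound]) (use meas le in \<open>auto intro!: AE_I2\<close>)
  with meas show "square_integrable M (\<lambda>x. \<phi> x * u x)"
    by (simp add: square_integrable_def)
  have "L2_sqnorm M (\<lambda>x. \<phi> x * u x) \<le> (\<integral>x. B\<^sup>2 * (cmod (u x))\<^sup>2 \<partial>M)"
    unfolding L2_sqnorm_def by (rule integral_mono_AE[OF int bound]) (use le in \<open>auto intro!: AE_I2\<close>)
  then show "L2_sqnorm M (\<lambda>x. \<phi> x * u x) \<le> B\<^sup>2 * L2_sqnorm M u"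
    by (simp add: L2_sqnorm_def)
qed

lemma square_integrable_cmult:
  assumes "square_integrable M u" shows "square_integrable M (\<lambda>x. c * u x)"
  using square_integrable_bounded_mult(1)[OF assms, of "\<lambda>_. c" "cmod c"] by simp

lemma square_integrable_diff:
  assumes "square_integrable M u" "square_integrable M v"
  shows "square_integrable M (\<lambda>x. u x - v x)"
  using square_integrable_add(1)[OF assms(1) square_integrable_cmult[OF assms(2), of "-1"]]
  by simp

lemma cmod_mult_le_sq: "cmod (a * b) \<le> (cmod a)\<^sup>2 + (cmod b)\<^sup>2"
proof -
  have "2 * cmod a * cmod b \<le> (cmod a)\<^sup>2 + (cmod b)\<^sup>2"
    by (rule sum_squares_bound)
  moreover have "0 \<le> cmod a * cmod b"
    by simp
  ultimately show ?thesis
    unfolding norm_mult by linarith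
qed

lemma square_integrable_mult_integrable:
  assumes u: "square_integrable M u" and v: "square_integrable M v"
  shows "integrable M (\<lambda>x. u x * v x)"
proof (rule Bochner_Integration.integrable_bound)
  show "integrable M (\<lambda>x. (cmod (u x))\<^sup>2 + (cmod (v x))\<^sup>2)"
    using u v by (simp add: square_integrable_def)
  show "(\<lambda>x. u x * v x) \<in> borel_measurable M"
    using u v by (auto simp: square_integrable_def)
  show "AE x in M. norm (u x * v x) \<le> norm ((cmod (u x))\<^sup>2 + (cmod (v x))\<^sup>2)"
    using cmod_mult_le_sq by (intro AE_I2) simp
qed

theorem L2_Cauchy_Schwarz:
  assumes u: "square_integrable M u" and v: "square_integrable M v"
  shows "(\<integral>x. cmod (u x * v x) \<partial>M) \<le> sqrt (L2_sqnorm M u * L2_sqnorm M v)"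
proof -
  have int: "integrable M (\<lambda>x. cmod (u x * v x))"
    using square_integrable_mult_integrable[OF u v] by simp
  have "(\<integral>\<^sup>+x. ennreal (cmod (u x)) * ennreal (cmod (v x)) \<partial>M)\<^sup>2 \<le>
        (\<integral>\<^sup>+x. ennreal (cmod (u x))^2 \<partial>M) * (\<integral>\<^sup>+x. ennreal (cmod (v x))^2 \<partial>M)"
    by (rule Cauchy_Schwarz_nn_integral) (use u v in \<open>auto simp: square_integrable_def\<close>)
  also have "(\<integral>\<^sup>+x. ennreal (cmod (u x)) * ennreal (cmod (v x)) \<partial>M)
      = ennreal (\<integral>x. cmod (u x * v x) \<partial>M)"
    using nn_integral_eq_integral[OF int] by (simp add: ennreal_mult' norm_mult)
  also have "(\<integral>\<^sup>+x. ennreal (cmod (u x))^2 \<partial>M) = ennreal (L2_sqnorm M u)"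
    using L2_sqnorm_eq_nn_integral[OF u] by (simp add: ennreal_power)
  also have "(\<integral>\<^sup>+x. ennreal (cmod (v x))^2 \<partial>M) = ennreal (L2_sqnorm M v)"
    using L2_sqnorm_eq_nn_integral[OF v] by (simp add: ennreal_power)
  finally have "ennreal ((\<integral>x. cmod (u x * v x) \<partial>M)\<^sup>2) \<le> ennreal (L2_sqnorm M u * L2_sqnorm M v)"
    by (simp add: ennreal_power integral_nonneg_AE ennreal_mult'[symmetric] L2_sqnorm_nonneg)
  then have "(\<integral>x. cmod (u x * v x) \<partial>M)\<^sup>2 \<le> L2_sqnorm M u * L2_sqnorm M v"
    by (simp add: L2_sqnorm_nonneg)
  then show ?thesis
    by (rule real_le_rsqrt)
qed


lemma L2_inner_Cauchy_Schwarz: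
  assumes "square_integrable M u" and "square_integrable M v"
  shows "cmod (L2_inner M u v) \<le> sqrt (L2_sqnorm M u * L2_sqnorm M v)"
  unfolding L2_inner_def
  using order_trans[OF integral_norm_bound L2_Cauchy_Schwarz[OF assms(1) square_integrable_cnj[OF assms(2)]]]
  by simp

lemma L2_inner_commute: "L2_inner M u v = cnj (L2_inner M v u)"
  unfolding L2_inner_def by (simp flip: Bochner_Integration.integral_cnj add: mult.commute)

lemma L2_inner_diff_left:
  assumes "square_integrable M a" and "square_integrable M b" and "square_integrable M c"
  shows "L2_inner M (\<lambda>x. a x - b x) c = L2_inner M a c - L2_inner M b c"
  unfolding L2_inner_def left_diff_distrib
  by (intro Bochner_Integration.integral_diff square_integrable_mult_integrable
      square_integrable_cnj assms)

lemma L2_sqnorm_add_mult: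
  assumes a: "square_integrable M a" and \<phi>: "square_integrable M \<phi>"
  shows "L2_sqnorm M (\<lambda>x. a x + t * \<phi> x) =
    L2_sqnorm M a + 2 * Re (cnj t * L2_inner M a \<phi>) + (cmod t)\<^sup>2 * L2_sqnorm M \<phi>"
proof -
  have int: "integrable M (\<lambda>x. a x * cnj (\<phi> x))"
    by (rule square_integrable_mult_integrable[OF a square_integrable_cnj[OF \<phi>]])
  define r where "r x = Re (cnj t * (a x * cnj (\<phi> x)))" for x
  have r: "integrable M r"
    unfolding r_def by (intro integrable_Re integrable_mult_right int)
  have "L2_sqnorm M (\<lambda>x. a x + t * \<phi> x) =
      (\<integral>x. (cmod (a x))\<^sup>2 + 2 * r x + (cmod t)\<^sup>2 * (cmod (\<phi> x))\<^sup>2 \<partial>M)"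
    unfolding L2_sqnorm_def r_def
    by (intro Bochner_Integration.integral_cong refl)
      (simp only: cmod_power2, simp add: power2_eq_square algebra_simps)
  also have "\<dots> = L2_sqnorm M a + 2 * (\<integral>x. r x \<partial>M) + (cmod t)\<^sup>2 * L2_sqnorm M \<phi>"
    using a \<phi> r by (simp add: L2_sqnorm_def square_integrable_def)
  also have "(\<integral>x. r x \<partial>M) = Re (\<integral>x. cnj t * (a x * cnj (\<phi> x)) \<partial>M)"
    unfolding r_def by (intro integral_Re integrable_mult_right int)
  also have "\<dots> = Re (cnj t * L2_inner M a \<phi>)"
    by (simp add: L2_inner_def)
  finally show ?thesis .
qed

lemma L2_sqnorm_parallelogram:
  assumes u: "square_integrable M u" and v: "square_integrable M v" and w: "square_integrable M w"
  shows "L2_sqnorm M (\<lambda>x. v x - w x) = 2 * L2_sqnorm M (\<lambda>x. u x - v x)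
    + 2 * L2_sqnorm M (\<lambda>x. u x - w x) - 4 * L2_sqnorm M (\<lambda>x. u x - (v x + w x) / 2)"
proof -
  have mid: "square_integrable M (\<lambda>x. u x - (v x + w x) / 2)"
    using square_integrable_diff[OF u square_integrable_cmult[OF square_integrable_add(1)[OF v w],
        of "1/2"]] by simp
  have "L2_sqnorm M (\<lambda>x. v x - w x) = (\<integral>x. 2 * (cmod (u x - v x))\<^sup>2 + 2 * (cmod (u x - w x))\<^sup>2
      - 4 * (cmod (u x - (v x + w x) / 2))\<^sup>2 \<partial>M)"
    unfolding L2_sqnorm_def
    by (intro Bochner_Integration.integral_cong refl)
      (simp only: cmod_power2, simp add: power2_eq_square field_simps)
  also have "\<dots> = 2 * L2_sqnorm M (\<lambda>x. u x - v x) + 2 * L2_sqnorm M (\<lambda>x. u x - w x)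
      - 4 * L2_sqnorm M (\<lambda>x. u x - (v x + w x) / 2)"
    using square_integrable_diff[OF u v] square_integrable_diff[OF u w] mid
    by (simp add: L2_sqnorm_def square_integrable_def)
  finally show ?thesis .
qed

lemma L2_inner_tendsto:
  assumes g: "\<And>n. square_integrable M (g n)" and h: "square_integrable M h"
    and \<psi>: "square_integrable M \<psi>"
    and lim: "(\<lambda>n. L2_sqnorm M (\<lambda>x. g n x - h x)) \<longlonglongrightarrow> 0"
  shows "(\<lambda>n. L2_inner M (g n) \<psi>) \<longlonglongrightarrow> L2_inner M h \<psi>"
proof -
  have "(\<lambda>n. L2_inner M (g n) \<psi> - L2_inner M h \<psi>) \<longlonglongrightarrow> 0"
  proof (rule Lim_null_comparison)
    show "\<forall>\<^sub>F n in sequentially. norm (L2_inner M (g n) \<psi> - L2_inner M h \<psi>)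
        \<le> sqrt (L2_sqnorm M (\<lambda>x. g n x - h x) * L2_sqnorm M \<psi>)"
      using L2_inner_Cauchy_Schwarz[OF square_integrable_diff[OF g h] \<psi>]
      by (intro always_eventually allI) (simp add: L2_inner_diff_left[OF g h \<psi>])
    show "(\<lambda>n. sqrt (L2_sqnorm M (\<lambda>x. g n x - h x) * L2_sqnorm M \<psi>)) \<longlonglongrightarrow> 0"
      using tendsto_real_sqrt[OF tendsto_mult[OF lim tendsto_const]] by simp
  qed
  then show ?thesis
    by (simp add: LIM_zero_iff)
qed

lemma square_integrable_AE_limit:
  assumes g: "\<And>m. square_integrable M (g m)" and G: "G \<in> borel_measurable M"
    and lim: "AE x in M. (\<lambda>m. g m x) \<longlonglongrightarrow> G x"
    and bound: "eventually (\<lambda>m. L2_sqnorm M (g m) \<le> c) sequentially"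
  shows "square_integrable M G" and "L2_sqnorm M G \<le> c"
proof -
  obtain m where "L2_sqnorm M (g m) \<le> c"
    using bound by (auto simp: eventually_sequentially)
  then have c: "0 \<le> c"
    using L2_sqnorm_nonneg[of M "g m"] by linarith
  have "(\<integral>\<^sup>+x. ennreal ((cmod (G x))\<^sup>2) \<partial>M) = (\<integral>\<^sup>+x. liminf (\<lambda>m. ennreal ((cmod (g m x))\<^sup>2)) \<partial>M)"
    using lim by (intro nn_integral_cong_AE) (auto elim!: eventually_mono
        intro!: lim_imp_Liminf[symmetric] tendsto_ennrealI tendsto_intros)
  also have "\<dots> \<le> liminf (\<lambda>m. \<integral>\<^sup>+x. ennreal ((cmod (g m x))\<^sup>2) \<partial>M)"
    by (rule nn_integral_liminf) (use g in \<open>auto simp: square_integrable_def\<close>)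
  also have "\<dots> \<le> ennreal c"
    using bound c by (intro Liminf_le)
      (auto simp: L2_sqnorm_eq_nn_integral[OF g, symmetric] elim!: eventually_mono)
  finally have le: "(\<integral>\<^sup>+x. ennreal ((cmod (G x))\<^sup>2) \<partial>M) \<le> ennreal c" .
  have "integrable M (\<lambda>x. (cmod (G x))\<^sup>2)"
    using G le by (intro integrableI_bounded) (auto simp: le_less_trans ennreal_less_top)
  with G show sq: "square_integrable M G"
    by (simp add: square_integrable_def)
  show "L2_sqnorm M G \<le> c"
    using le c by (simp add: L2_sqnorm_eq_nn_integral[OF sq, symmetric])
qed

lemma complex_eq_0_if_quadratic_nonneg:
  assumes "\<And>t. 0 \<le> 2 * Re (cnj t * J) + (cmod t)\<^sup>2 * P"
  shows "J = 0"
proof -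
  define s where "s = 1 / (\<bar>P\<bar> + 1)"
  have s: "0 < s" "s * P < 1"
    by (auto simp: s_def field_simps)
  have "0 \<le> 2 * Re (cnj (- (s * J)) * J) + (cmod (- (s * J)))\<^sup>2 * P"
    by (rule assms)
  also have "\<dots> = s * (cmod J)\<^sup>2 * (s * P - 2)"
    by (simp only: cmod_power2) (simp add: power2_eq_square algebra_simps)
  finally have nonneg: "0 \<le> s * (cmod J)\<^sup>2 * (s * P - 2)" .
  show ?thesis
  proof (rule ccontr)
    assume "J \<noteq> 0"
    with s have "0 < s * (cmod J)\<^sup>2"
      by simp
    with s have "s * (cmod J)\<^sup>2 * (s * P - 2) < 0"
      by (simp add: mult_pos_neg)
    with nonneg show False
      by linarith
  qed
qed

section \<open>Completeness and orthogonal projection\<close>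

lemma L2_Cauchy_if_minimizing:
  assumes V: "\<And>v. v \<in> V \<Longrightarrow> square_integrable M v"
    and V_add: "\<And>v w. v \<in> V \<Longrightarrow> w \<in> V \<Longrightarrow> (\<lambda>x. v x + w x) \<in> V"
    and V_scale: "\<And>c v. v \<in> V \<Longrightarrow> (\<lambda>x. c * v x) \<in> V"
    and u: "square_integrable M u" and v: "\<And>n. v n \<in> V"
    and d_le: "\<And>w. w \<in> V \<Longrightarrow> d \<le> L2_sqnorm M (\<lambda>x. u x - w x)"
    and v_d: "\<And>n. L2_sqnorm M (\<lambda>x. u x - v n x) < d + inverse (real (Suc n))"
    and "e > 0"
  shows "\<exists>N. \<forall>i\<ge>N. \<forall>j\<ge>N. L2_sqnorm M (\<lambda>x. (u x - v i x) - (u x - v j x)) < e"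
proof -
  define D where "D w = L2_sqnorm M (\<lambda>x. u x - w x)" for w
  \<comment> \<open>Parallelogram law, using that the midpoint of \<open>v i\<close> and \<open>v j\<close> lies in \<open>V\<close>.\<close>
  have excess: "L2_sqnorm M (\<lambda>x. v j x - v i x) \<le> 2 * (D (v i) - d) + 2 * (D (v j) - d)" for i j
  proof -
    have "(\<lambda>x. (v j x + v i x) / 2) \<in> V"
      using V_scale[OF V_add[OF v v], of "1/2"] by simp
    then have "d \<le> D (\<lambda>x. (v j x + v i x) / 2)"
      unfolding D_def by (rule d_le)
    moreover have "L2_sqnorm M (\<lambda>x. v j x - v i x) =
        2 * D (v j) + 2 * D (v i) - 4 * D (\<lambda>x. (v j x + v i x) / 2)"
      unfolding D_def by (rule L2_sqnorm_parallelogram[OF u V[OF v] V[OF v]])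
    ultimately show ?thesis
      by argo
  qed
  obtain N where N: "inverse (real (Suc N)) < e / 4"
    using \<open>e > 0\<close> reals_Archimedean by (metis divide_pos_pos zero_less_numeral)
  have "L2_sqnorm M (\<lambda>x. (u x - v i x) - (u x - v j x)) < e" if "i \<ge> N" "j \<ge> N" for i j
  proof -
    have "inverse (real (Suc i)) \<le> inverse (real (Suc N))"
      and "inverse (real (Suc j)) \<le> inverse (real (Suc N))"
      using that by (simp_all add: le_imp_inverse_le)
    then have "L2_sqnorm M (\<lambda>x. v j x - v i x) < e"
      using excess[of j i] v_d[of i, folded D_def] v_d[of j, folded D_def] N by argo
    then show ?thesis
      by simp
  qed
  then show ?thesis
    by blast
qed

context finite_measure
begin

lemma square_integrable_bounded:
  assumes "u \<in> borel_measurable M" and "\<And>x. x \<in> space M \<Longrightarrow> cmod (u x) \<le> B"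
  shows "square_integrable M u"
proof -
  have "integrable M (\<lambda>x. (cmod (u x))\<^sup>2)"
    using assms by (intro integrable_const_bound[where B="B\<^sup>2"] AE_I2)
      (auto intro!: power_mono)
  with assms show ?thesis
    by (simp add: square_integrable_def)
qed

lemma square_integrable_if_bounded:
  assumes "u \<in> borel_measurable M \<and> (\<exists>B. \<forall>x\<in>space M. cmod (u x) \<le> B)"
  shows "square_integrable M u"
  using assms square_integrable_bounded by blast

lemma square_integrable_integrable:
  assumes "square_integrable M u" shows "integrable M u"
  using square_integrable_mult_integrable[OF assms square_integrable_bounded[of "\<lambda>_. 1" 1]]
  by simp

lemma L1_le_L2:
  assumes "square_integrable M u"
  shows "(\<integral>x. cmod (u x) \<partial>M) \<le> sqrt (L2_sqnorm M u * measure M (space M))"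
  using L2_Cauchy_Schwarz[OF assms square_integrable_bounded[of "\<lambda>_. 1" 1]]
  by (simp add: L2_sqnorm_def)

lemma L1_Cauchy_if_L2_Cauchy:
  assumes f: "\<And>n. square_integrable M (f n)"
    and Cauchy: "\<And>e. e > 0 \<Longrightarrow> \<exists>N. \<forall>i\<ge>N. \<forall>j\<ge>N. L2_sqnorm M (\<lambda>x. f i x - f j x) < e"
    and e: "e > 0"
  shows "\<exists>N. \<forall>i\<ge>N. \<forall>j\<ge>N. (\<integral>x. norm (f i x - f j x) \<partial>M) < e"
proof -
  define \<mu> where "\<mu> = measure M (space M)"
  have \<mu>: "0 \<le> \<mu>"
    by (simp add: \<mu>_def)
  obtain N where N: "\<forall>i\<ge>N. \<forall>j\<ge>N. L2_sqnorm M (\<lambda>x. f i x - f j x) < e\<^sup>2 / (\<mu> + 1)"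
    using Cauchy[of "e\<^sup>2 / (\<mu> + 1)"] e \<mu> by auto
  have "(\<integral>x. norm (f i x - f j x) \<partial>M) < e" if "i \<ge> N" "j \<ge> N" for i j
  proof -
    have "(\<integral>x. norm (f i x - f j x) \<partial>M) \<le> sqrt (L2_sqnorm M (\<lambda>x. f i x - f j x) * \<mu>)"
      unfolding \<mu>_def by (rule L1_le_L2[OF square_integrable_diff[OF f f]])
    also have "\<dots> \<le> sqrt (e\<^sup>2 / (\<mu> + 1) * \<mu>)"
      using N that \<mu> by (intro real_sqrt_le_mono mult_right_mono) (auto intro: less_imp_le)
    also have "\<dots> < sqrt (e\<^sup>2)"
      using e \<mu> by (intro real_sqrt_less_mono) (simp add: field_simps)
    finally show ?thesis
      using e by simp
  qed
  then show ?thesis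
    by blast
qed

theorem square_integrable_complete:
  assumes f: "\<And>n. square_integrable M (f n)"
    and Cauchy: "\<And>e. e > 0 \<Longrightarrow> \<exists>N. \<forall>i\<ge>N. \<forall>j\<ge>N. L2_sqnorm M (\<lambda>x. f i x - f j x) < e"
  obtains F where "square_integrable M F" and "(\<lambda>n. L2_sqnorm M (\<lambda>x. f n x - F x)) \<longlonglongrightarrow> 0"
proof -
  obtain r where r: "strict_mono r" and AE_Cauchy: "AE x in M. Cauchy (\<lambda>i. f (r i) x)"
    using cauchy_L1_AE_cauchy_subseq[OF square_integrable_integrable[OF f]
        L1_Cauchy_if_L2_Cauchy[OF f Cauchy]] by blast
  define F where "F x = lim (\<lambda>i. f (r i) x)" for x
  have F_meas: "F \<in> borel_measurable M"
    unfolding F_def using f by (intro borel_measurable_lim_metric) (auto simp: square_integrable_def)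
  have F_lim: "AE x in M. (\<lambda>i. f (r i) x) \<longlonglongrightarrow> F x"
    using AE_Cauchy by eventually_elim (simp add: F_def Cauchy_convergent_iff convergent_LIMSEQ_iff)
  have close: "square_integrable M (\<lambda>x. f n x - F x) \<and> L2_sqnorm M (\<lambda>x. f n x - F x) \<le> e"
    if N: "\<forall>i\<ge>N. \<forall>j\<ge>N. L2_sqnorm M (\<lambda>x. f i x - f j x) < e" and n: "n \<ge> N" for n N e
  proof -
    have "eventually (\<lambda>m. L2_sqnorm M (\<lambda>x. f n x - f (r m) x) \<le> e) sequentially"
      unfolding eventually_sequentially
      using N n seq_suble[OF r] by (metis less_imp_le order_trans)
    moreover have "AE x in M. (\<lambda>m. f n x - f (r m) x) \<longlonglongrightarrow> f n x - F x"
      using F_lim by eventually_elim (intro tendsto_intros)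
    moreover have "(\<lambda>x. f n x - F x) \<in> borel_measurable M"
      using F_meas f[of n] unfolding square_integrable_def by (intro borel_measurable_diff) auto
    ultimately show ?thesis
      using square_integrable_AE_limit[of M "\<lambda>m x. f n x - f (r m) x" "\<lambda>x. f n x - F x" e]
        square_integrable_diff[OF f f] by blast
  qed
  obtain N where "\<forall>i\<ge>N. \<forall>j\<ge>N. L2_sqnorm M (\<lambda>x. f i x - f j x) < 1"
    using Cauchy[of 1] by auto
  then have "square_integrable M (\<lambda>x. f N x - F x)"
    using close by blast
  then have "square_integrable M (\<lambda>x. f N x - (f N x - F x))"
    by (rule square_integrable_diff[OF f])
  then have "square_integrable M F"
    by simp
  moreover have "(\<lambda>n. L2_sqnorm M (\<lambda>x. f n x - F x)) \<longlonglongrightarrow> 0"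
  proof (rule LIMSEQ_I)
    fix e :: real
    assume "e > 0"
    then obtain N where "\<forall>i\<ge>N. \<forall>j\<ge>N. L2_sqnorm M (\<lambda>x. f i x - f j x) < e / 2"
      using Cauchy[of "e / 2"] by auto
    then have "norm (L2_sqnorm M (\<lambda>x. f n x - F x) - 0) < e" if "n \<ge> N" for n
      using close[of N "e / 2" n] that \<open>e > 0\<close> L2_sqnorm_nonneg[of M "\<lambda>x. f n x - F x"]
      by auto
    then show "\<exists>N. \<forall>n\<ge>N. norm (L2_sqnorm M (\<lambda>x. f n x - F x) - 0) < e"
      by blast
  qed
  ultimately show ?thesis
    by (rule that)
qed

lemma L2_minimizing_sequence:
  assumes V: "\<And>v. v \<in> V \<Longrightarrow> square_integrable M v"
    and V_zero: "(\<lambda>_. 0) \<in> V"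
    and V_add: "\<And>v w. v \<in> V \<Longrightarrow> w \<in> V \<Longrightarrow> (\<lambda>x. v x + w x) \<in> V"
    and V_scale: "\<And>c v. v \<in> V \<Longrightarrow> (\<lambda>x. c * v x) \<in> V"
    and u: "square_integrable M u"
  obtains v h where "\<And>n. v n \<in> V" and "square_integrable M h"
    and "(\<lambda>n. L2_sqnorm M (\<lambda>x. u x - v n x - h x)) \<longlonglongrightarrow> 0"
    and "(\<lambda>n. L2_sqnorm M (\<lambda>x. u x - v n x)) \<longlonglongrightarrow> (INF w\<in>V. L2_sqnorm M (\<lambda>x. u x - w x))"
proof -
  define D where "D w = L2_sqnorm M (\<lambda>x. u x - w x)" for w
  define d where "d = (INF w\<in>V. D w)"
  have bdd: "bdd_below (D ` V)"
    by (intro bdd_belowI2[of _ 0]) (simp add: D_def L2_sqnorm_nonneg)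
  have d_le: "d \<le> D w" if "w \<in> V" for w
    unfolding d_def using bdd that by (rule cINF_lower)
  have "\<exists>w\<in>V. D w < d + inverse (real (Suc n))" for n
    using cINF_less_iff[OF _ bdd, of "d + inverse (real (Suc n))"] V_zero unfolding d_def by force
  then obtain v where v: "\<And>n. v n \<in> V" and v_D: "\<And>n. D (v n) < d + inverse (real (Suc n))"
    by metis
  have D_lim: "(\<lambda>n. D (v n)) \<longlonglongrightarrow> d"
  proof (rule tendsto_sandwich[of "\<lambda>_. d" _ _ "\<lambda>n. d + inverse (real (Suc n))"])
    show "(\<lambda>n. d + inverse (real (Suc n))) \<longlonglongrightarrow> d"
      using tendsto_add[OF tendsto_const LIMSEQ_inverse_real_of_nat, of d] by simp
    show "\<forall>\<^sub>F n in sequentially. d \<le> D (v n)"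
      using d_le v by (intro always_eventually) blast
    show "\<forall>\<^sub>F n in sequentially. D (v n) \<le> d + inverse (real (Suc n))"
      using v_D less_imp_le by (intro always_eventually) blast
  qed simp
  obtain h where h: "square_integrable M h"
    and h_lim: "(\<lambda>n. L2_sqnorm M (\<lambda>x. u x - v n x - h x)) \<longlonglongrightarrow> 0"
    using square_integrable_complete[OF square_integrable_diff[OF u V[OF v]]
        L2_Cauchy_if_minimizing[OF V V_add V_scale u v d_le[unfolded D_def] v_D[unfolded D_def]]]
    by blast
  from v h h_lim D_lim show ?thesis
    unfolding D_def d_def by (rule that)
qed

theorem L2_projection:
  assumes V: "\<And>v. v \<in> V \<Longrightarrow> square_integrable M v"
    and V_zero: "(\<lambda>_. 0) \<in> V"
    and V_add: "\<And>v w. v \<in> V \<Longrightarrow> w \<in> V \<Longrightarrow> (\<lambda>x. v x + w x) \<in> V"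
    and V_scale: "\<And>c v. v \<in> V \<Longrightarrow> (\<lambda>x. c * v x) \<in> V"
    and u: "square_integrable M u"
  obtains v h where "\<And>n. v n \<in> V" and "square_integrable M h"
    and "(\<lambda>n. L2_sqnorm M (\<lambda>x. u x - v n x - h x)) \<longlonglongrightarrow> 0"
    and "\<And>\<phi>. \<phi> \<in> V \<Longrightarrow> L2_inner M h \<phi> = 0"
proof -
  define d where "d = (INF w\<in>V. L2_sqnorm M (\<lambda>x. u x - w x))"
  obtain v h where v: "\<And>n. v n \<in> V" and h: "square_integrable M h"
    and h_lim: "(\<lambda>n. L2_sqnorm M (\<lambda>x. u x - v n x - h x)) \<longlonglongrightarrow> 0"
    and d_lim: "(\<lambda>n. L2_sqnorm M (\<lambda>x. u x - v n x)) \<longlonglongrightarrow> d"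
    using L2_minimizing_sequence[OF V V_zero V_add V_scale u] unfolding d_def by blast
  have d_le: "d \<le> L2_sqnorm M (\<lambda>x. u x - w x)" if "w \<in> V" for w
    unfolding d_def using that by (intro cINF_lower bdd_belowI2[of _ 0] L2_sqnorm_nonneg)
  have w: "square_integrable M (\<lambda>x. u x - v n x)" for n
    using square_integrable_diff[OF u V[OF v]] .
  have "L2_inner M h \<phi> = 0" if \<phi>: "\<phi> \<in> V" for \<phi>
  proof (rule complex_eq_0_if_quadratic_nonneg)
    fix t :: complex
    have "d \<le> L2_sqnorm M (\<lambda>x. u x - v n x) + 2 * Re (cnj t * L2_inner M (\<lambda>x. u x - v n x) \<phi>)
        + (cmod t)\<^sup>2 * L2_sqnorm M \<phi>" for n
    proof -
      have "d \<le> L2_sqnorm M (\<lambda>x. u x - (v n x + (- t) * \<phi> x))"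
        using d_le V_add[OF v V_scale[OF \<phi>]] by blast
      also have "\<dots> = L2_sqnorm M (\<lambda>x. (u x - v n x) + t * \<phi> x)"
        by (rule arg_cong[where f = "L2_sqnorm M"]) (auto simp: algebra_simps)
      also have "\<dots> = L2_sqnorm M (\<lambda>x. u x - v n x) + 2 * Re (cnj t * L2_inner M (\<lambda>x. u x - v n x) \<phi>)
          + (cmod t)\<^sup>2 * L2_sqnorm M \<phi>"
        by (rule L2_sqnorm_add_mult[OF w V[OF \<phi>]])
      finally show ?thesis .
    qed
    moreover have "(\<lambda>n. L2_sqnorm M (\<lambda>x. u x - v n x)
          + 2 * Re (cnj t * L2_inner M (\<lambda>x. u x - v n x) \<phi>) + (cmod t)\<^sup>2 * L2_sqnorm M \<phi>)
        \<longlonglongrightarrow> d + 2 * Re (cnj t * L2_inner M h \<phi>) + (cmod t)\<^sup>2 * L2_sqnorm M \<phi>"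
      by (intro tendsto_intros d_lim L2_inner_tendsto[OF w h V[OF \<phi>] h_lim])
    ultimately have "d \<le> d + 2 * Re (cnj t * L2_inner M h \<phi>) + (cmod t)\<^sup>2 * L2_sqnorm M \<phi>"
      by (intro LIMSEQ_le_const) auto
    then show "0 \<le> 2 * Re (cnj t * L2_inner M h \<phi>) + (cmod t)\<^sup>2 * L2_sqnorm M \<phi>"
      by simp
  qed
  with v h h_lim show ?thesis
    by (rule that)
qed

lemma integral_sq_norm_scaleR_eq_0:
  assumes V_bdd: "\<And>v. v \<in> V \<Longrightarrow> v \<in> borel_measurable M \<and> (\<exists>B. \<forall>x\<in>space M. cmod (v x) \<le> B)"
    and V_add: "\<And>v w. v \<in> V \<Longrightarrow> w \<in> V \<Longrightarrow> (\<lambda>x. v x + w x) \<in> V"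
    and V_scale: "\<And>c v. v \<in> V \<Longrightarrow> (\<lambda>x. c * v x) \<in> V"
    and V_mult: "\<And>v w. v \<in> V \<Longrightarrow> w \<in> V \<Longrightarrow> (\<lambda>x. v x * w x) \<in> V"
    and v: "\<And>n. v n \<in> V" and h: "square_integrable M h"
    and h_lim: "(\<lambda>n. L2_sqnorm M (\<lambda>x. 1 - v n x - h x)) \<longlonglongrightarrow> 0"
    and orth: "\<And>\<phi>. \<phi> \<in> V \<Longrightarrow> L2_inner M h \<phi> = 0"
    and \<phi>: "\<phi> \<in> V"
  shows "(\<integral>x. (cmod (h x))\<^sup>2 *\<^sub>R \<phi> x \<partial>M) = 0"
proof -
  obtain B where \<phi>_meas: "\<phi> \<in> borel_measurable M" and B: "\<And>x. x \<in> space M \<Longrightarrow> cmod (\<phi> x) \<le> B"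
    using V_bdd[OF \<phi>] by blast
  have one_v: "square_integrable M (\<lambda>x. 1 - v n x)" for n
    using square_integrable_bounded[of "\<lambda>_. 1" 1] square_integrable_if_bounded[OF V_bdd[OF v]]
    by (intro square_integrable_diff) auto
  \<comment> \<open>Each \<open>\<phi> (1 - v n)\<close> lies in \<open>V\<close>, hence is orthogonal to \<open>h\<close>, and tends to \<open>\<phi> h\<close>.\<close>
  have "(\<lambda>n. L2_inner M (\<lambda>x. \<phi> x * (1 - v n x)) h) \<longlonglongrightarrow> L2_inner M (\<lambda>x. \<phi> x * h x) h"
  proof (rule L2_inner_tendsto[OF square_integrable_bounded_mult(1)[OF one_v \<phi>_meas B]
        square_integrable_bounded_mult(1)[OF h \<phi>_meas B] h])
    show "(\<lambda>n. L2_sqnorm M (\<lambda>x. \<phi> x * (1 - v n x) - \<phi> x * h x)) \<longlonglongrightarrow> 0"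
    proof (rule tendsto_sandwich[of "\<lambda>_. 0" _ _ "\<lambda>n. B\<^sup>2 * L2_sqnorm M (\<lambda>x. 1 - v n x - h x)"])
      show "\<forall>\<^sub>F n in sequentially. L2_sqnorm M (\<lambda>x. \<phi> x * (1 - v n x) - \<phi> x * h x)
          \<le> B\<^sup>2 * L2_sqnorm M (\<lambda>x. 1 - v n x - h x)"
        using square_integrable_bounded_mult(2)[OF square_integrable_diff[OF one_v h] \<phi>_meas B]
        by (intro always_eventually allI) (simp add: right_diff_distrib)
      show "(\<lambda>n. B\<^sup>2 * L2_sqnorm M (\<lambda>x. 1 - v n x - h x)) \<longlonglongrightarrow> 0"
        using tendsto_mult[OF tendsto_const h_lim] by simp
    qed (simp_all add: L2_sqnorm_nonneg)
  qed
  moreover have "L2_inner M (\<lambda>x. \<phi> x * (1 - v n x)) h = 0" for n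
  proof -
    have "(\<lambda>x. \<phi> x + (-1) * (\<phi> x * v n x)) \<in> V"
      using V_add[OF \<phi> V_scale[OF V_mult[OF \<phi> v]]] .
    moreover have "(\<lambda>x. \<phi> x + (-1) * (\<phi> x * v n x)) = (\<lambda>x. \<phi> x * (1 - v n x))"
      by (simp add: fun_eq_iff algebra_simps)
    ultimately show ?thesis
      using orth L2_inner_commute[of M h] by force
  qed
  ultimately have "L2_inner M (\<lambda>x. \<phi> x * h x) h = 0"
    by (simp add: LIMSEQ_const_iff)
  moreover have "L2_inner M (\<lambda>x. \<phi> x * h x) h = (\<integral>x. (cmod (h x))\<^sup>2 *\<^sub>R \<phi> x \<partial>M)"
    unfolding L2_inner_def by (intro Bochner_Integration.integral_cong refl)
      (simp only: scaleR_conv_of_real complex_norm_square mult_ac)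
  ultimately show ?thesis
    by simp
qed

theorem L2_approx_one_if_no_annihilating_density:
  assumes V_bdd: "\<And>v. v \<in> V \<Longrightarrow> v \<in> borel_measurable M \<and> (\<exists>B. \<forall>x\<in>space M. cmod (v x) \<le> B)"
    and V_zero: "(\<lambda>_. 0) \<in> V"
    and V_add: "\<And>v w. v \<in> V \<Longrightarrow> w \<in> V \<Longrightarrow> (\<lambda>x. v x + w x) \<in> V"
    and V_scale: "\<And>c v. v \<in> V \<Longrightarrow> (\<lambda>x. c * v x) \<in> V"
    and V_mult: "\<And>v w. v \<in> V \<Longrightarrow> w \<in> V \<Longrightarrow> (\<lambda>x. v x * w x) \<in> V"
    and no_density: "\<And>h. square_integrable M h \<Longrightarrow>
      (\<forall>v\<in>V. (\<integral>x. (cmod (h x))\<^sup>2 *\<^sub>R v x \<partial>M) = 0) \<Longrightarrow> L2_sqnorm M h = 0"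
    and "\<delta> > 0"
  shows "\<exists>v\<in>V. L2_sqnorm M (\<lambda>x. 1 - v x) < \<delta>"
proof -
  note V = square_integrable_if_bounded[OF V_bdd]
  have one: "square_integrable M (\<lambda>_. 1)"
    by (rule square_integrable_bounded[of _ 1]) auto
  obtain v h where v: "\<And>n. v n \<in> V" and h: "square_integrable M h"
    and h_lim: "(\<lambda>n. L2_sqnorm M (\<lambda>x. 1 - v n x - h x)) \<longlonglongrightarrow> 0"
    and orth: "\<And>\<phi>. \<phi> \<in> V \<Longrightarrow> L2_inner M h \<phi> = 0"
    using L2_projection[OF V V_zero V_add V_scale one] by blast
  then have h_0: "L2_sqnorm M h = 0"
    using no_density integral_sq_norm_scaleR_eq_0[OF V_bdd V_add V_scale V_mult] by blast
  have "eventually (\<lambda>n. L2_sqnorm M (\<lambda>x. 1 - v n x - h x) < \<delta> / 2) sequentially"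
    by (rule order_tendstoD(2)[OF h_lim]) (use \<open>\<delta> > 0\<close> in simp)
  then obtain n where n: "L2_sqnorm M (\<lambda>x. 1 - v n x - h x) < \<delta> / 2"
    by (auto simp: eventually_sequentially)
  have "L2_sqnorm M (\<lambda>x. h x + (1 - v n x - h x)) \<le>
      2 * L2_sqnorm M h + 2 * L2_sqnorm M (\<lambda>x. 1 - v n x - h x)"
    by (intro square_integrable_add(2) h square_integrable_diff one V v)
  with n h_0 have "L2_sqnorm M (\<lambda>x. 1 - v n x) < \<delta>"
    by simp
  with v show ?thesis
    by blast
qed

end

lemma L2_closure_eq_if_one_approximable:
  fixes M :: "(complex \<times> complex) measure"
  assumes "finite_measure M"
    and W_bdd: "\<And>w. w \<in> W \<Longrightarrow> w \<in> borel_measurable M \<and> (\<exists>B. \<forall>x\<in>space M. cmod (w x) \<le> B)"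
    and "V \<subseteq> W"
    and ideal: "\<And>v w. v \<in> V \<Longrightarrow> w \<in> W \<Longrightarrow> (\<lambda>x. v x * w x) \<in> V"
    and one: "\<And>\<delta>. \<delta> > 0 \<Longrightarrow> \<exists>v\<in>V. L2_sqnorm M (\<lambda>x. 1 - v x) < \<delta>"
  shows "L2_closure M V = L2_closure M W"
proof
  interpret finite_measure M by fact
  show "L2_closure M V \<subseteq> L2_closure M W"
    using \<open>V \<subseteq> W\<close> by (fastforce simp: L2_closure_iff)
  show "L2_closure M W \<subseteq> L2_closure M V"
  proof
    note W = square_integrable_if_bounded[OF W_bdd]
    fix h assume "h \<in> L2_closure M W"
    then have h: "square_integrable M h"
      and approx: "\<And>e. e > 0 \<Longrightarrow> \<exists>f\<in>W. L2_sqnorm M (\<lambda>x. h x - f x) < e"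
      unfolding L2_closure_iff by auto
    have "\<exists>k\<in>V. L2_sqnorm M (\<lambda>x. h x - k x) < e" if "e > 0" for e
    proof -
      obtain f where f: "f \<in> W" and hf: "L2_sqnorm M (\<lambda>x. h x - f x) < e / 4"
        using approx[of "e / 4"] \<open>e > 0\<close> by auto
      obtain B where f_meas: "f \<in> borel_measurable M" and B: "\<And>x. x \<in> space M \<Longrightarrow> cmod (f x) \<le> B"
        using W_bdd[OF f] by blast
      have "0 < e / (4 * (B\<^sup>2 + 1))"
        using \<open>e > 0\<close> by (simp add: add_nonneg_pos)
      then obtain v where v: "v \<in> V" and v1: "L2_sqnorm M (\<lambda>x. 1 - v x) < e / (4 * (B\<^sup>2 + 1))"
        using one by blast
      have one_v: "square_integrable M (\<lambda>x. 1 - v x)"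
        using v \<open>V \<subseteq> W\<close>
        by (intro square_integrable_diff[OF square_integrable_bounded[of _ 1]] W) auto
      have "L2_sqnorm M (\<lambda>x. f x * (1 - v x)) \<le> B\<^sup>2 * L2_sqnorm M (\<lambda>x. 1 - v x)"
        by (rule square_integrable_bounded_mult(2)[OF one_v f_meas B])
      also have "\<dots> \<le> B\<^sup>2 * (e / (4 * (B\<^sup>2 + 1)))"
        using v1 by (intro mult_left_mono) auto
      also have "\<dots> \<le> e / 4"
        using \<open>e > 0\<close> by (simp add: field_simps add_pos_nonneg)
      finally have fv: "L2_sqnorm M (\<lambda>x. f x * (1 - v x)) \<le> e / 4" .
      have "L2_sqnorm M (\<lambda>x. (h x - f x) + f x * (1 - v x)) \<le>
          2 * L2_sqnorm M (\<lambda>x. h x - f x) + 2 * L2_sqnorm M (\<lambda>x. f x * (1 - v x))"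
        using h f_meas B W[OF f]
        by (intro square_integrable_add(2) square_integrable_diff square_integrable_bounded_mult(1)[OF one_v])
      with hf fv have "L2_sqnorm M (\<lambda>x. h x - v x * f x) < e"
        by (simp add: algebra_simps)
      then show ?thesis
        using ideal[OF v f] by (intro bexI[where x = "\<lambda>x. v x * f x"])
    qed
    with h show "h \<in> L2_closure M V"
      unfolding L2_closure_iff by blast
  qed
qed

section \<open>The bidisc algebra\<close>

lemma bidisc_algebra_const: "(\<lambda>_. c) \<in> bidisc_algebra"
  by (simp add: bidisc_algebra_def)

lemma bidisc_algebra_add:
  "f \<in> bidisc_algebra \<Longrightarrow> g \<in> bidisc_algebra \<Longrightarrow> (\<lambda>x. f x + g x) \<in> bidisc_algebra"
  unfolding bidisc_algebra_def by (auto intro!: continuous_on_add holomorphic_on_add)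

lemma bidisc_algebra_mult:
  "f \<in> bidisc_algebra \<Longrightarrow> g \<in> bidisc_algebra \<Longrightarrow> (\<lambda>x. f x * g x) \<in> bidisc_algebra"
  unfolding bidisc_algebra_def by (auto intro!: continuous_on_mult holomorphic_on_mult)

lemma bidisc_algebra_fst_mult_snd: "(\<lambda>p. fst p * snd p) \<in> bidisc_algebra"
  unfolding bidisc_algebra_def by (auto intro!: continuous_intros holomorphic_intros)

lemma bidisc_algebra0_subset: "bidisc_algebra0 \<subseteq> bidisc_algebra"
  unfolding bidisc_algebra0_def using bidisc_algebra_mult[OF bidisc_algebra_fst_mult_snd] by auto

lemma bidisc_algebra0_mult:
  assumes "g \<in> bidisc_algebra0" and "f \<in> bidisc_algebra"
  shows "(\<lambda>x. g x * f x) \<in> bidisc_algebra0"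
proof -
  obtain a where "a \<in> bidisc_algebra" and "g = (\<lambda>p. fst p * snd p * a p)"
    using assms(1) unfolding bidisc_algebra0_def by auto
  with assms(2) show ?thesis
    unfolding bidisc_algebra0_def
    by (intro CollectI exI[of _ "\<lambda>x. a x * f x"]) (auto simp: bidisc_algebra_mult algebra_simps)
qed

lemma bidisc_algebra0_zero: "(\<lambda>_. 0) \<in> bidisc_algebra0"
  using bidisc_algebra0_mult[of _ "\<lambda>_. 0"] bidisc_algebra_const
  unfolding bidisc_algebra0_def by fastforce

lemma bidisc_algebra0_add:
  assumes "f \<in> bidisc_algebra0" and "g \<in> bidisc_algebra0"
  shows "(\<lambda>x. f x + g x) \<in> bidisc_algebra0"
proof -
  obtain a b where "a \<in> bidisc_algebra" "b \<in> bidisc_algebra"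
    and "f = (\<lambda>p. fst p * snd p * a p)" "g = (\<lambda>p. fst p * snd p * b p)"
    using assms unfolding bidisc_algebra0_def by auto
  then show ?thesis
    unfolding bidisc_algebra0_def
    by (intro CollectI exI[of _ "\<lambda>x. a x + b x"]) (auto simp: bidisc_algebra_add algebra_simps)
qed

lemma bidisc_algebra0_scale:
  "g \<in> bidisc_algebra0 \<Longrightarrow> (\<lambda>x. c * g x) \<in> bidisc_algebra0"
  using bidisc_algebra0_mult[OF _ bidisc_algebra_const, of g c] by (simp add: mult.commute)

lemma bidisc_algebra_bounded_measurable:
  assumes "borel_measure_on_T2 \<mu>" and "f \<in> bidisc_algebra"
  shows "f \<in> borel_measurable \<mu> \<and> (\<exists>B. \<forall>x\<in>space \<mu>. cmod (f x) \<le> B)"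
proof -
  have torus2: "torus2 = sphere 0 1 \<times> sphere 0 1"
    by (auto simp: torus2_def)
  have sets: "sets \<mu> = sets (restrict_space borel torus2)"
    using assms(1) by (simp add: borel_measure_on_T2_def)
  have cont: "continuous_on torus2 f"
    using assms(2) unfolding bidisc_algebra_def torus2
    by (auto elim!: continuous_on_subset)
  then have "f \<in> borel_measurable \<mu>"
    using borel_measurable_continuous_on_restrict measurable_cong_sets[OF sets refl] by blast
  moreover have "bounded (f ` torus2)"
    using cont compact_Times[OF compact_sphere compact_sphere] unfolding torus2
    by (intro compact_imp_bounded compact_continuous_image)
  moreover have "space \<mu> = torus2"
    using sets_eq_imp_space_eq[OF sets] by (simp add: space_restrict_space)
  ultimately show ?thesis
    by (auto simp: bounded_iff)
qed

lemma sq_density_on_torus2: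
  fixes \<mu> :: "(complex \<times> complex) measure"
  assumes \<mu>: "borel_measure_on_T2 \<mu>"
    and null: "emeasure \<mu> (torus2 - S) = 0" and S: "closed S"
    and h: "square_integrable \<mu> h"
  defines "\<nu> \<equiv> density \<mu> (\<lambda>x. ennreal ((cmod (h x))\<^sup>2))"
  shows "borel_measure_on_T2 \<nu>" and "finite_measure \<nu>" and "emeasure \<nu> (torus2 - S) = 0"
    and "emeasure \<nu> torus2 = ennreal (L2_sqnorm \<mu> h)"
    and "\<And>g :: complex \<times> complex \<Rightarrow> complex. g \<in> borel_measurable \<mu> \<Longrightarrow>
      (\<integral>x. g x \<partial>\<nu>) = (\<integral>x. (cmod (h x))\<^sup>2 *\<^sub>R g x \<partial>\<mu>)"
proof -
  have sets: "sets \<mu> = sets (restrict_space borel torus2)"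
    using \<mu> by (simp add: borel_measure_on_T2_def)
  have space: "space \<mu> = torus2"
    using sets_eq_imp_space_eq[OF sets] by (simp add: space_restrict_space)
  have h_meas: "(\<lambda>x. (cmod (h x))\<^sup>2) \<in> borel_measurable \<mu>"
    using h by (auto simp: square_integrable_def)
  show "borel_measure_on_T2 \<nu>"
    using sets by (simp add: \<nu>_def borel_measure_on_T2_def)
  show total: "emeasure \<nu> torus2 = ennreal (L2_sqnorm \<mu> h)"
    unfolding \<nu>_def L2_sqnorm_eq_nn_integral[OF h]
    using h_meas by (subst emeasure_density) (auto simp: space[symmetric] intro!: nn_integral_cong)
  then show "finite_measure \<nu>"
    by (intro finite_measureI) (simp add: \<nu>_def space)
  have "torus2 - S \<in> sets \<mu>"
    using S by (simp add: sets sets_restrict_space Diff_eq)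
  moreover have "AE x in \<mu>. x \<notin> torus2 - S"
    using null \<open>torus2 - S \<in> sets \<mu>\<close> by (intro AE_not_in) (simp add: null_sets_def)
  then have "(\<integral>\<^sup>+x. ennreal ((cmod (h x))\<^sup>2) * indicator (torus2 - S) x \<partial>\<mu>) = (\<integral>\<^sup>+x. 0 \<partial>\<mu>)"
    by (intro nn_integral_cong_AE) (auto elim!: eventually_mono)
  ultimately show "emeasure \<nu> (torus2 - S) = 0"
    unfolding \<nu>_def using h_meas by (subst emeasure_density) auto
  show "(\<integral>x. g x \<partial>\<nu>) = (\<integral>x. (cmod (h x))\<^sup>2 *\<^sub>R g x \<partial>\<mu>)"
    if "g \<in> borel_measurable \<mu>" for g :: "complex \<times> complex \<Rightarrow> complex"
    unfolding \<nu>_def using integral_density[OF that h_meas] by simp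
qed

lemma L2_sqnorm_eq_0_if_no_annihilating_measure:
  fixes \<mu> :: "(complex \<times> complex) measure"
  assumes no_measure: "\<not> (\<exists>\<nu>. borel_measure_on_T2 \<nu> \<and> finite_measure \<nu> \<and>
      emeasure \<nu> (torus2 - S) = 0 \<and> emeasure \<nu> torus2 \<noteq> 0 \<and>
      (\<forall>g \<in> bidisc_algebra0. (\<integral>x. g x \<partial>\<nu>) = 0))"
    and \<mu>: "borel_measure_on_T2 \<mu>" and null: "emeasure \<mu> (torus2 - S) = 0"
    and S: "closed S" and h: "square_integrable \<mu> h"
    and ann: "\<forall>g\<in>bidisc_algebra0. (\<integral>x. (cmod (h x))\<^sup>2 *\<^sub>R g x \<partial>\<mu>) = 0"
  shows "L2_sqnorm \<mu> h = 0"
proof -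
  define \<nu> where "\<nu> = density \<mu> (\<lambda>x. ennreal ((cmod (h x))\<^sup>2))"
  note \<nu> = sq_density_on_torus2[OF \<mu> null S h, folded \<nu>_def]
  have "\<forall>g\<in>bidisc_algebra0. (\<integral>x. g x \<partial>\<nu>) = 0"
    using ann \<nu>(5) bidisc_algebra_bounded_measurable[OF \<mu>] bidisc_algebra0_subset by auto
  with \<nu>(1-3) no_measure have "emeasure \<nu> torus2 = 0"
    by blast
  then show ?thesis
    using \<nu>(4) L2_sqnorm_nonneg[of \<mu> h] by simp
qed

theorem mainTheorem11:
  fixes S :: "(complex \<times> complex) set"
  assumes "S \<subseteq> torus2" and "compact S"
    and "\<not> (\<exists>\<nu>. borel_measure_on_T2 \<nu> \<and> finite_measure \<nu> \<and>
              emeasure \<nu> (torus2 - S) = 0 \<and> emeasure \<nu> torus2 \<noteq> 0 \<and>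
              (\<forall>g \<in> bidisc_algebra0. (\<integral>x. g x \<partial>\<nu>) = 0))"
  shows "\<forall>\<mu>. borel_measure_on_T2 \<mu> \<and> finite_measure \<mu> \<and> emeasure \<mu> (torus2 - S) = 0
           \<longrightarrow> L2_closure \<mu> bidisc_algebra0 = L2_closure \<mu> bidisc_algebra"
proof (intro allI impI)
  fix \<mu> :: "(complex \<times> complex) measure"
  assume \<mu>: "borel_measure_on_T2 \<mu> \<and> finite_measure \<mu> \<and> emeasure \<mu> (torus2 - S) = 0"
  then interpret finite_measure \<mu>
    by blast
  note A = bidisc_algebra_bounded_measurable[of \<mu>]
  have A0: "\<And>g. g \<in> bidisc_algebra0 \<Longrightarrow> g \<in> borel_measurable \<mu> \<and> (\<exists>B. \<forall>x\<in>space \<mu>. cmod (g x) \<le> B)"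
    using \<mu> A bidisc_algebra0_subset by blast
  have "\<exists>v\<in>bidisc_algebra0. L2_sqnorm \<mu> (\<lambda>x. 1 - v x) < \<delta>" if "\<delta> > 0" for \<delta>
    using L2_sqnorm_eq_0_if_no_annihilating_measure[OF assms(3) _ _ compact_imp_closed[OF assms(2)]] \<mu>
    by (intro L2_approx_one_if_no_annihilating_density[OF A0 bidisc_algebra0_zero bidisc_algebra0_add
          bidisc_algebra0_scale bidisc_algebra0_mult[OF _ subsetD[OF bidisc_algebra0_subset]] _ that])
      blast+
  then show "L2_closure \<mu> bidisc_algebra0 = L2_closure \<mu> bidisc_algebra"
    using \<mu> A by (intro L2_closure_eq_if_one_approximable bidisc_algebra0_subset bidisc_algebra0_mult)
      blast+
qed

end
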